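(* Let $L$ be a finite lattice with exactly two coatoms and $U$ a finite lattice with exactly two atoms. Then any vertical 2-sum $L +_2 U$ of $L$ and $U$ is a lattice.
   Context: Let $L' = L \setminus \{\top_L\}$ and $U' = U \setminus \{\bot_U\}$, where $\top_L$ is the top of $L$ and $\bot_U$ the bottom of $U$. A vertical 2-sum $L +_2 U$ is the poset obtained from the disjoint union of $L'$ and $U'$ by identifying the two coatoms of $L$ with the two atoms of $U$ via some bijection; the order is the one generated by the orders of $L'$ and $U'$, i.e. $x \le y$ iff $x,y \in L'$ and $x \le_L y$, or $x,y \in U'$ and $x \le_U y$, or $x \in L'$, $y \in U'$ and there is an identified element $c$ with $x \le_L c$ and $c \le_U y$. *)

theory Defs
  imports Main "HOL-Algebra.Lattice"
begin

definition coatom :: "'a::bounded_lattice \<Rightarrow> bool" where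
  "coatom c \<longleftrightarrow> c < Orderings.top \<and> \<not> (\<exists>x. c < x \<and> x < Orderings.top)"

definition atom :: "'b::bounded_lattice \<Rightarrow> bool" where
  "atom a \<longleftrightarrow> Orderings.bot < a \<and> \<not> (\<exists>x. Orderings.bot < x \<and> x < a)"

text \<open>Elements live in the type 'a + 'b:
  L' = L - {top} is represented by Inl, U' = U - {bot} is represented by Inr,
  except that the atoms of U are identified with the coatoms of L via the
  bijection f (an atom f c of U is represented by Inl c).\<close>

definition v2sum_carrier :: "('a::bounded_lattice \<Rightarrow> 'b::bounded_lattice) \<Rightarrow> ('a + 'b) set" where
  "v2sum_carrier f = Inl ` {a. a \<noteq> Orderings.top} \<union> Inr ` {u. u \<noteq> Orderings.bot \<and> \<not> atom u}"

fun lpart :: "('a + 'b) \<Rightarrow> 'a option" where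
  "lpart (Inl a) = Some a"
| "lpart (Inr u) = None"

fun upart :: "('a::bounded_lattice \<Rightarrow> 'b) \<Rightarrow> ('a + 'b) \<Rightarrow> 'b option" where
  "upart f (Inl a) = (if coatom a then Some (f a) else None)"
| "upart f (Inr u) = Some u"

definition v2sum_le :: "('a::bounded_lattice \<Rightarrow> 'b::bounded_lattice) \<Rightarrow> ('a + 'b) \<Rightarrow> ('a + 'b) \<Rightarrow> bool" where
  "v2sum_le f x y \<longleftrightarrow>
     (\<exists>a b. lpart x = Some a \<and> lpart y = Some b \<and> a \<le> b)
   \<or> (\<exists>u v. upart f x = Some u \<and> upart f y = Some v \<and> u \<le> v)
   \<or> (\<exists>a v c. lpart x = Some a \<and> upart f y = Some v \<and> coatom c \<and> a \<le> c \<and> f c \<le> v)"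

definition vertical_2sum :: "('a::bounded_lattice \<Rightarrow> 'b::bounded_lattice) \<Rightarrow> ('a + 'b) gorder" where
  "vertical_2sum f = \<lparr>carrier = v2sum_carrier f, eq = (=), le = v2sum_le f\<rparr>"

end

theory Submission
  imports Defs
begin

text \<open>Joins in \<open>L +\<^sub>2 U\<close>: two elements of \<open>L'\<close> whose join is not \<open>\<top>\<close> keep their join;
  if it is \<open>\<top>\<close>, they lie under different coatoms, so every common upper bound in \<open>U'\<close>
  lies above both atoms and the join is the join of the two atoms of \<open>U\<close>.  For
  \<open>a \<in> L'\<close> and \<open>v \<in> U'\<close>, either \<open>v\<close> lies above an atom \<open>f c\<close> with \<open>a \<le> c\<close>, or \<open>v\<close> lies above
  the atom of the other coatom, \<open>a\<close> lies under exactly one coatom \<open>c\<close>, and the join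
  is \<open>v \<squnion> f c\<close>.\<close>

lemma (in upper_semilattice) lattice_if_finite_with_bottom:
  assumes "finite (carrier L)" and "b \<in> carrier L" and "\<And>x. x \<in> carrier L \<Longrightarrow> b \<sqsubseteq> x"
  shows "lattice L"
proof
  fix x y assume xy: "x \<in> carrier L" "y \<in> carrier L"
  let ?S = "Lower L {x, y}"
  have S: "finite ?S" "?S \<subseteq> carrier L" "?S \<noteq> {}"
    using assms xy finite_subset[of ?S "carrier L"] by (auto simp: Lower_def)
  then have sup: "is_lub L (\<Squnion>?S) ?S"
    by (rule finite_sup_least)
  have "x \<in> Upper L ?S" "y \<in> Upper L ?S"
    using xy by (auto simp: Upper_def Lower_def)
  then have "\<Squnion>?S \<in> ?S"
    using sup least_le[OF sup] by (auto simp: Lower_def)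
  moreover have "\<forall>t\<in>?S. t \<sqsubseteq> \<Squnion>?S"
    using Upper_memD[OF least_mem[OF sup] _ S(2)] by blast
  ultimately have "greatest L (\<Squnion>?S) ?S"
    using S(2) by (simp add: greatest_def)
  then show "\<exists>s. greatest L s ?S" ..
qed

lemma coatom_not_top: "coatom c \<Longrightarrow> c \<noteq> Orderings.top"
  unfolding coatom_def by auto

lemma atom_not_bot: "atom p \<Longrightarrow> p \<noteq> Orderings.bot"
  unfolding atom_def by auto

lemma le_atomD:
  assumes "atom p" and "u \<le> p"
  shows "u = Orderings.bot \<or> u = p"
  using assms bot.not_eq_extremum unfolding atom_def by (metis order.not_eq_order_implies_strict)

lemma ex_coatom_above:
  fixes a :: "'a::{finite,bounded_lattice}"
  assumes "a \<noteq> Orderings.top"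
  obtains c where "coatom c" and "a \<le> c"
proof -
  let ?A = "{x. a \<le> x \<and> x \<noteq> Orderings.top}"
  obtain m where m: "m \<in> ?A" "\<And>x. x \<in> ?A \<Longrightarrow> m \<le> x \<Longrightarrow> m = x"
    using finite_has_maximal2[of ?A a] assms by auto
  have "\<not> (m < x \<and> x < Orderings.top)" for x
    using m(1) m(2)[of x] by force
  then have "coatom m"
    using m(1) top.not_eq_extremum unfolding coatom_def by blast
  with m(1) that show thesis by blast
qed

lemma ex_atom_below:
  fixes u :: "'a::{finite,bounded_lattice}"
  assumes "u \<noteq> Orderings.bot"
  obtains p where "atom p" and "p \<le> u"
proof -
  let ?A = "{x. x \<le> u \<and> x \<noteq> Orderings.bot}"
  obtain m where m: "m \<in> ?A" "\<And>x. x \<in> ?A \<Longrightarrow> x \<le> m \<Longrightarrow> m = x"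
    using finite_has_minimal2[of ?A u] assms by auto
  have "\<not> (Orderings.bot < x \<and> x < m)" for x
    using m(1) m(2)[of x] by force
  then have "atom m"
    using m(1) bot.not_eq_extremum unfolding atom_def by blast
  with m(1) that show thesis by blast
qed

lemma nonbot_nonatom_upclosed:
  fixes u w :: "'a::bounded_lattice"
  assumes "u \<noteq> Orderings.bot" and "\<not> atom u" and "u \<le> w"
  shows "w \<noteq> Orderings.bot \<and> \<not> atom w"
  using assms le_atomD bot_unique by metis

lemma sup_distinct_atoms_nonbot_nonatom:
  assumes "atom p" and "atom q" and "p \<noteq> q"
  shows "sup p q \<noteq> Orderings.bot \<and> \<not> atom (sup p q)"
  using assms le_atomD atom_not_bot sup_ge1 sup_ge2 bot_unique by metis

lemma v2sum_carrier_simps [simp]: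
  "Inl a \<in> v2sum_carrier f \<longleftrightarrow> a \<noteq> Orderings.top"
  "Inr u \<in> v2sum_carrier f \<longleftrightarrow> u \<noteq> Orderings.bot \<and> \<not> atom u"
  unfolding v2sum_carrier_def by auto

locale coatom_atom_bij =
  fixes f :: "'a::{finite,bounded_lattice} \<Rightarrow> 'b::{finite,bounded_lattice}"
  assumes bij_coatoms_atoms: "bij_betw f {c. coatom c} {p. atom p}"
begin

lemma atom_f: "coatom c \<Longrightarrow> atom (f c)"
  using bij_coatoms_atoms by (auto dest: bij_betwE)

lemma atom_imageE:
  assumes "atom p"
  obtains c where "coatom c" and "p = f c"
  using assms bij_coatoms_atoms by (auto simp: bij_betw_def)

lemma f_le_f_iff:
  assumes "coatom c" and "coatom d"
  shows "f c \<le> f d \<longleftrightarrow> c = d"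
  using assms le_atomD[OF atom_f[OF \<open>coatom d\<close>]] atom_not_bot[OF atom_f[OF \<open>coatom c\<close>]]
    bij_betw_imp_inj_on[OF bij_coatoms_atoms] by (auto simp: inj_on_def)

lemma le_Inl_Inl [simp]: "v2sum_le f (Inl a) (Inl b) \<longleftrightarrow> a \<le> b"
  unfolding v2sum_le_def by (auto simp: f_le_f_iff)

lemma le_Inl_Inr [simp]:
  "v2sum_le f (Inl a) (Inr v) \<longleftrightarrow> (\<exists>c. coatom c \<and> a \<le> c \<and> f c \<le> v)"
  unfolding v2sum_le_def by auto

lemma le_Inr_Inr [simp]: "v2sum_le f (Inr u) (Inr v) \<longleftrightarrow> u \<le> v"
  unfolding v2sum_le_def by auto

lemma not_le_Inr_Inl [simp]: "Inr v \<in> v2sum_carrier f \<Longrightarrow> \<not> v2sum_le f (Inr v) (Inl b)"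
  unfolding v2sum_le_def using le_atomD atom_f by (auto split: if_splits)

lemma partial_order_v2sum: "partial_order (vertical_2sum f)"
proof
  fix x y z
  assume "x \<in> carrier (vertical_2sum f)" "y \<in> carrier (vertical_2sum f)"
    "z \<in> carrier (vertical_2sum f)"
  then have C: "x \<in> v2sum_carrier f" "y \<in> v2sum_carrier f" "z \<in> v2sum_carrier f"
    by (simp_all add: vertical_2sum_def)
  show "x \<sqsubseteq>\<^bsub>vertical_2sum f\<^esub> x"
    using C by (cases x) (simp_all add: vertical_2sum_def)
  show "x \<sqsubseteq>\<^bsub>vertical_2sum f\<^esub> y \<Longrightarrow> y \<sqsubseteq>\<^bsub>vertical_2sum f\<^esub> x \<Longrightarrow> x .=\<^bsub>vertical_2sum f\<^esub> y"
    using C not_le_Inr_Inl by (cases x; cases y) (auto simp: vertical_2sum_def)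
  show "x \<sqsubseteq>\<^bsub>vertical_2sum f\<^esub> y \<Longrightarrow> y \<sqsubseteq>\<^bsub>vertical_2sum f\<^esub> z \<Longrightarrow> x \<sqsubseteq>\<^bsub>vertical_2sum f\<^esub> z"
    using C not_le_Inr_Inl
    by (cases x; cases y; cases z) (auto simp: vertical_2sum_def intro: order.trans)
qed (simp_all add: vertical_2sum_def)

lemma is_lub_v2sumI:
  assumes "x \<in> v2sum_carrier f" and "y \<in> v2sum_carrier f" and "s \<in> v2sum_carrier f"
    and "v2sum_le f x s" and "v2sum_le f y s"
    and "\<And>d. d \<noteq> Orderings.top \<Longrightarrow> v2sum_le f x (Inl d) \<Longrightarrow> v2sum_le f y (Inl d) \<Longrightarrow>
      v2sum_le f s (Inl d)"
    and "\<And>w. Inr w \<in> v2sum_carrier f \<Longrightarrow> v2sum_le f x (Inr w) \<Longrightarrow> v2sum_le f y (Inr w) \<Longrightarrow>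
      v2sum_le f s (Inr w)"
  shows "is_lub (vertical_2sum f) s {x, y}"
proof -
  have "v2sum_le f s z"
    if "z \<in> v2sum_carrier f" "v2sum_le f x z" "v2sum_le f y z" for z
    using that assms(6,7) by (cases z) auto
  then show ?thesis
    using assms(1-5) by (auto simp: least_def Upper_def vertical_2sum_def)
qed

lemma Inl_bot_le: "x \<in> v2sum_carrier f \<Longrightarrow> v2sum_le f (Inl Orderings.bot) x"
proof (cases x)
  case (Inr w)
  assume "x \<in> v2sum_carrier f"
  then obtain p where p: "atom p" "p \<le> w"
    using Inr ex_atom_below by auto
  obtain c where "coatom c" "p = f c"
    using atom_imageE[OF p(1)] .
  then show ?thesis
    using Inr p(2) by auto
qed simp

end

locale two_coatoms = coatom_atom_bij f
  for f :: "'a::{finite,bounded_lattice} \<Rightarrow> 'b::{finite,bounded_lattice}" +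
  fixes c1 c2 :: 'a
  assumes coatom_iff: "coatom c \<longleftrightarrow> c = c1 \<or> c = c2"
    and coatoms_distinct: "c1 \<noteq> c2"
begin

lemma coatom_c1: "coatom c1" and coatom_c2: "coatom c2"
  using coatom_iff by blast+

lemma coatom_eq_either:
  "coatom c \<Longrightarrow> coatom c' \<Longrightarrow> c \<noteq> c' \<Longrightarrow> coatom (e::'a) \<Longrightarrow> e = c \<or> e = c'"
  unfolding coatom_iff by blast

lemma join_Inl_Inl_below_top:
  assumes "sup a b \<noteq> Orderings.top"
  shows "is_lub (vertical_2sum f) (Inl (sup a b)) {Inl a, Inl b}"
proof (rule is_lub_v2sumI)
  show "Inl a \<in> v2sum_carrier f" and "Inl b \<in> v2sum_carrier f"
    using assms by auto
  fix w assume "v2sum_le f (Inl a) (Inr w)" "v2sum_le f (Inl b) (Inr w)"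
  then obtain c c' where c: "coatom c" "a \<le> c" "f c \<le> w" and c': "coatom c'" "b \<le> c'" "f c' \<le> w"
    by auto
  obtain e where e: "coatom e" "sup a b \<le> e"
    using ex_coatom_above[OF assms] .
  have "\<exists>c''. coatom c'' \<and> sup a b \<le> c'' \<and> f c'' \<le> w"
  proof (cases "c = c'")
    case True
    then show ?thesis using c c' by auto
  next
    case False
    then have "e = c \<or> e = c'"
      using coatom_eq_either[OF c(1) c'(1) _ e(1)] by blast
    then show ?thesis using e c c' by blast
  qed
  then show "v2sum_le f (Inl (sup a b)) (Inr w)" by simp
qed (use assms in simp_all)

lemma join_Inl_Inl_top:
  assumes "a \<noteq> Orderings.top" and "b \<noteq> Orderings.top" and "sup a b = Orderings.top"
  shows "is_lub (vertical_2sum f) (Inr (sup (f c1) (f c2))) {Inl a, Inl b}"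
proof (rule is_lub_v2sumI)
  show "Inr (sup (f c1) (f c2)) \<in> v2sum_carrier f"
    using sup_distinct_atoms_nonbot_nonatom[OF atom_f[OF coatom_c1] atom_f[OF coatom_c2]]
      f_le_f_iff[OF coatom_c1 coatom_c2] coatoms_distinct by auto
  have "v2sum_le f (Inl t) (Inr (sup (f c1) (f c2)))" if t: "t \<noteq> Orderings.top" for t
  proof -
    obtain e where "coatom e" "t \<le> e"
      using ex_coatom_above[OF t] .
    moreover have "f e \<le> sup (f c1) (f c2)"
      using \<open>coatom e\<close> coatom_iff by auto
    ultimately show ?thesis
      by auto
  qed
  with assms show "v2sum_le f (Inl a) (Inr (sup (f c1) (f c2)))"
    and "v2sum_le f (Inl b) (Inr (sup (f c1) (f c2)))" by blast+
next
  fix w assume "v2sum_le f (Inl a) (Inr w)" "v2sum_le f (Inl b) (Inr w)"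
  then obtain c c' where c: "coatom c" "a \<le> c" "f c \<le> w" and c': "coatom c'" "b \<le> c'" "f c' \<le> w"
    by auto
  have "c \<noteq> c'"
  proof
    assume "c = c'"
    then have "sup a b \<le> c" using c c' by simp
    then show False using assms(3) coatom_not_top[OF c(1)] by (simp add: top_unique)
  qed
  then have "f c1 \<le> w" and "f c2 \<le> w"
    using coatom_eq_either[OF c(1) c'(1)] coatom_c1 coatom_c2 c c' by blast+
  then show "v2sum_le f (Inr (sup (f c1) (f c2))) (Inr w)"
    by simp
next
  fix d assume "v2sum_le f (Inl a) (Inl d)" "v2sum_le f (Inl b) (Inl d)" "d \<noteq> Orderings.top"
  then have "sup a b \<le> d"
    by simp
  with assms(3) \<open>d \<noteq> Orderings.top\<close> show "v2sum_le f (Inr (sup (f c1) (f c2))) (Inl d)"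
    by (simp add: top_unique)
qed (use assms in simp_all)

lemma ex_join_Inl_Inr:
  assumes a: "a \<noteq> Orderings.top" and v: "Inr v \<in> v2sum_carrier f"
  shows "\<exists>s. is_lub (vertical_2sum f) s {Inl a, Inr v}"
proof (cases "\<exists>c. coatom c \<and> a \<le> c \<and> f c \<le> v")
  case True
  then have "is_lub (vertical_2sum f) (Inr v) {Inl a, Inr v}"
    using a v by (intro is_lub_v2sumI) auto
  then show ?thesis ..
next
  case False
  obtain c where c: "coatom c" "a \<le> c"
    using ex_coatom_above[OF a] .
  obtain d where d: "coatom d" "f d \<le> v"
    using v ex_atom_below atom_imageE by (metis v2sum_carrier_simps(2))
  have "\<not> a \<le> d"
    using False d by blast
  then have "c \<noteq> d"
    using c by blast
  have "is_lub (vertical_2sum f) (Inr (sup v (f c))) {Inl a, Inr v}"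
  proof (rule is_lub_v2sumI)
    show "Inr (sup v (f c)) \<in> v2sum_carrier f"
      using v nonbot_nonatom_upclosed[of v "sup v (f c)"] by simp
  next
    fix w assume "v2sum_le f (Inl a) (Inr w)" "v2sum_le f (Inr v) (Inr w)"
    then obtain c' where c': "coatom c'" "a \<le> c'" "f c' \<le> w" and "v \<le> w"
      by auto
    moreover have "c' = c"
      using coatom_eq_either[OF c(1) d(1) \<open>c \<noteq> d\<close> c'(1)] c' False d by blast
    ultimately show "v2sum_le f (Inr (sup v (f c))) (Inr w)"
      by simp
  qed (use a v c in auto)
  then show ?thesis ..
qed

lemma join_Inr_Inr:
  assumes "Inr u \<in> v2sum_carrier f" and "Inr v \<in> v2sum_carrier f"
  shows "is_lub (vertical_2sum f) (Inr (sup u v)) {Inr u, Inr v}"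
  using assms nonbot_nonatom_upclosed[of u "sup u v"] by (intro is_lub_v2sumI) auto

lemma ex_join:
  assumes "x \<in> v2sum_carrier f" and "y \<in> v2sum_carrier f"
  shows "\<exists>s. is_lub (vertical_2sum f) s {x, y}"
proof (cases x; cases y)
  fix a b assume "x = Inl a" "y = Inl b"
  then show ?thesis
    using assms join_Inl_Inl_below_top[of a b] join_Inl_Inl_top[of a b]
    by (cases "sup a b = Orderings.top") auto
next
  fix a v assume "x = Inl a" "y = Inr v"
  then show ?thesis
    using assms ex_join_Inl_Inr by simp
next
  fix u b assume "x = Inr u" "y = Inl b"
  then show ?thesis
    using assms ex_join_Inl_Inr[of b u] by (simp add: insert_commute)
next
  fix u v assume "x = Inr u" "y = Inr v"
  then show ?thesis
    using assms join_Inr_Inr by blast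
qed

lemma upper_semilattice_v2sum: "upper_semilattice (vertical_2sum f)"
  using partial_order_v2sum ex_join
  by (simp add: upper_semilattice_def upper_semilattice_axioms_def vertical_2sum_def)

lemma lattice_v2sum: "lattice (vertical_2sum f)"
proof (rule upper_semilattice.lattice_if_finite_with_bottom[OF upper_semilattice_v2sum])
  show "finite (carrier (vertical_2sum f))"
    by (rule finite)
  show "Inl Orderings.bot \<in> carrier (vertical_2sum f)"
    using coatom_not_top[OF coatom_c1] bot.extremum_uniqueI[of c1]
    by (auto simp: vertical_2sum_def)
  show "Inl Orderings.bot \<sqsubseteq>\<^bsub>vertical_2sum f\<^esub> x" if "x \<in> carrier (vertical_2sum f)" for x
    using that Inl_bot_le by (simp add: vertical_2sum_def)
qed

end

theorem lemma3p3:
  fixes f :: "'a::{finite, bounded_lattice} \<Rightarrow> 'b::{finite, bounded_lattice}"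
  assumes "card {c::'a. coatom c} = 2"
      and "card {a::'b. atom a} = 2"
      and "bij_betw f {c. coatom c} {a. atom a}"
  shows "lattice (vertical_2sum f)"
proof -
  obtain c1 c2 where "{c::'a. coatom c} = {c1, c2}" and "c1 \<noteq> c2"
    using assms(1) card_2_iff by metis
  then interpret two_coatoms f c1 c2
    using assms(3) by unfold_locales auto
  show ?thesis
    by (rule lattice_v2sum)
qed

end
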